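(* Let $0\to M\xrightarrow{i}\Lambda\xrightarrow{d}B\to0$ be an exact sequence of lattices, $P\subset\Lambda_\mathbb{Q}$ a polyhedron, and $F\subset P$ an $M$-stable face. Then the map $i^*:\Lambda^\vee_\mathbb{Q}\to M^\vee_\mathbb{Q}$ restricts to a bijection $i^*_F:N_FP\to N_{F_M}P_M$.
   Context: Notation: $P_M=P\cap M_\mathbb{Q}$, $F_M=F\cap M_\mathbb{Q}$ (identifying $M$ with $i(M)$). For $y\in\Lambda^\vee_\mathbb{Q}$, $\mathrm{face}_y(P)=\{x\in P:\langle x,y\rangle=\min_P\langle-,y\rangle\}$; faces are the nonempty sets of this form; $N_FP=\{y\in\Lambda^\vee_\mathbb{Q}:\mathrm{face}_y(P)\supset F\}$, and analogously $N_{F_M}P_M\subset M^\vee_\mathbb{Q}$ for the face $F_M$ of $P_M$. $\langle F\rangle$ is the span of the differences of elements of $F$; $F$ is $M$-stable if the relative interior of $F$ meets $M_\mathbb{Q}$ and $\langle F\rangle+M_\mathbb{Q}=\Lambda_\mathbb{Q}$. *)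

theory Defs
  imports "HOL-Analysis.Analysis"
begin

text \<open>Rational vector spaces are modelled as rat ^ 'a with 'a a finite index type.
  The pairing between a rational vector space and its dual is the standard one.\<close>

definition pairQ :: "rat ^ 'a \<Rightarrow> rat ^ 'a \<Rightarrow> rat" where
  "pairQ x y = (\<Sum>i\<in>UNIV. x $ i * y $ i)"

definition polyhedronQ :: "(rat ^ 'a) set \<Rightarrow> bool" where
  "polyhedronQ P \<longleftrightarrow> (\<exists>H :: ((rat ^ 'a) \<times> rat) set. finite H \<and>
      P = {x. \<forall>(a, b)\<in>H. pairQ a x \<ge> b})"

definition faceQ :: "rat ^ 'a \<Rightarrow> (rat ^ 'a) set \<Rightarrow> (rat ^ 'a) set" where
  "faceQ y P = {x \<in> P. \<forall>z\<in>P. pairQ x y \<le> pairQ z y}"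

definition is_faceQ :: "(rat ^ 'a) set \<Rightarrow> (rat ^ 'a) set \<Rightarrow> bool" where
  "is_faceQ F P \<longleftrightarrow> F \<noteq> {} \<and> (\<exists>y. F = faceQ y P)"

definition normal_coneQ :: "(rat ^ 'a) set \<Rightarrow> (rat ^ 'a) set \<Rightarrow> (rat ^ 'a) set" where
  "normal_coneQ F P = {y. F \<subseteq> faceQ y P}"

definition spanQ :: "(rat ^ 'a) set \<Rightarrow> (rat ^ 'a) set" where
  "spanQ S = {x. \<exists>T c. finite T \<and> T \<subseteq> S \<and> x = (\<Sum>v\<in>T. c v *s v)}"

definition aff_hullQ :: "(rat ^ 'a) set \<Rightarrow> (rat ^ 'a) set" where
  "aff_hullQ S = {x. \<exists>T c. finite T \<and> T \<subseteq> S \<and> sum c T = 1 \<and> x = (\<Sum>v\<in>T. c v *s v)}"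

definition rel_interiorQ :: "(rat ^ 'a) set \<Rightarrow> (rat ^ 'a) set" where
  "rel_interiorQ S = {x \<in> S. \<exists>e>0. \<forall>z\<in>aff_hullQ S. (\<forall>i. \<bar>z $ i - x $ i\<bar> < e) \<longrightarrow> z \<in> S}"

definition dir_spanQ :: "(rat ^ 'a) set \<Rightarrow> (rat ^ 'a) set" where
  "dir_spanQ F = spanQ {x - y | x y. x \<in> F \<and> y \<in> F}"

definition ratmat :: "int ^ 'm ^ 'n \<Rightarrow> rat ^ 'm ^ 'n" where
  "ratmat A = (\<chi> r c. of_int (A $ r $ c))"

definition M_stable :: "int ^ 'm ^ 'n \<Rightarrow> (rat ^ 'n) set \<Rightarrow> bool" where
  "M_stable A F \<longleftrightarrow>
     rel_interiorQ F \<inter> range (\<lambda>m. ratmat A *v m) \<noteq> {} \<and>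
     (\<forall>v. \<exists>a\<in>dir_spanQ F. \<exists>m. v = a + ratmat A *v m)"

end

theory Submission
  imports Defs
begin

text \<open>Every \<open>y \<in> N\<^sub>FP\<close> is constant on \<open>F\<close>, hence vanishes on \<open>\<langle>F\<rangle>\<close>, and since
  \<open>\<langle>F\<rangle> + M\<^sub>\<rat> = \<Lambda>\<^sub>\<rat>\<close> it is determined by its restriction to \<open>M\<^sub>\<rat>\<close>; this gives
  injectivity. Conversely, a \<open>z \<in> N\<^bsub>F\<^sub>M\<^esub>P\<^sub>M\<close> is constant on \<open>F\<^sub>M\<close>, which by the
  relative interior point of \<open>F\<close> in \<open>M\<^sub>\<rat>\<close> forces \<open>z\<close> to vanish on \<open>B\<^sup>-\<^sup>1\<langle>F\<rangle>\<close>;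
  so \<open>a + B m \<mapsto> \<langle>m, z\<rangle>\<close> is a well-defined functional \<open>y\<close> on \<open>\<Lambda>\<^sub>\<rat>\<close>. It lies in
  \<open>N\<^sub>FP\<close> because from a relative interior point of \<open>F\<close> one can step towards any point
  of \<open>P\<close> modulo \<open>\<langle>F\<rangle>\<close> while staying inside \<open>P\<close> and \<open>M\<^sub>\<rat>\<close>.\<close>

subsection \<open>The standard pairing\<close>

(* keep the shape transpose B *v y of the statement instead of y v* B *)
declare transpose_matrix_vector [simp del]

lemma pairQ_add_left: "pairQ (x + y) z = pairQ x z + pairQ y z"
  by (simp add: pairQ_def sum.distrib distrib_right)

lemma pairQ_diff_left: "pairQ (x - y) z = pairQ x z - pairQ y z"
  by (simp add: pairQ_def sum_subtractf left_diff_distrib)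

lemma pairQ_scale_left: "pairQ (c *s x) z = c * pairQ x z"
  by (simp add: pairQ_def sum_distrib_left mult.assoc)

lemma pairQ_add_right: "pairQ z (x + y) = pairQ z x + pairQ z y"
  by (simp add: pairQ_def sum.distrib distrib_left)

lemma pairQ_diff_right: "pairQ z (x - y) = pairQ z x - pairQ z y"
  by (simp add: pairQ_def sum_subtractf right_diff_distrib)

lemma pairQ_scale_right: "pairQ z (c *s x) = c * pairQ z x"
  by (simp add: pairQ_def sum_distrib_left mult_ac)

lemma pairQ_zero_left [simp]: "pairQ 0 z = 0"
  by (simp add: pairQ_def)

lemma pairQ_zero_right [simp]: "pairQ z 0 = 0"
  by (simp add: pairQ_def)

lemma pairQ_axis_left: "pairQ (axis j 1) w = w $ j"
proof -
  have e: "(\<lambda>i. axis j 1 $ i * w $ i) = (\<lambda>i. if i = j then w $ i else 0)"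
    by (auto simp: axis_def)
  show ?thesis
    unfolding pairQ_def e by simp
qed

lemma pairQ_eqI: "(\<And>m. pairQ m u = pairQ m v) \<Longrightarrow> u = v"
  by (simp add: vec_eq_iff flip: pairQ_axis_left)

lemma pairQ_self_eq_0: "pairQ w w = 0 \<Longrightarrow> w = 0"
  unfolding pairQ_def by (subst (asm) sum_nonneg_eq_0_iff) (auto simp: vec_eq_iff)

lemma pairQ_transpose_right: "pairQ m (transpose B *v y) = pairQ (B *v m) y"
proof -
  have "pairQ m (transpose B *v y) = (\<Sum>j\<in>UNIV. \<Sum>i\<in>UNIV. m$j * (B$i$j * y$i))"
    by (simp add: pairQ_def matrix_vector_mult_def transpose_def sum_distrib_left)
  also have "\<dots> = (\<Sum>i\<in>UNIV. \<Sum>j\<in>UNIV. m$j * (B$i$j * y$i))"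
    by (rule sum.swap)
  also have "\<dots> = pairQ (B *v m) y"
    by (simp add: pairQ_def matrix_vector_mult_def sum_distrib_right sum_distrib_left mult_ac)
  finally show ?thesis .
qed

lemma pairQ_representation:
  fixes f :: "rat ^ 'n \<Rightarrow> rat"
  assumes add: "\<And>u v. f (u + v) = f u + f v" and scale: "\<And>c v. f (c *s v) = c * f v"
  shows "pairQ v (\<chi> i. f (axis i 1)) = f v"
proof -
  have f_sum: "f (\<Sum>i\<in>S. g i) = (\<Sum>i\<in>S. f (g i))" if "finite S" for S :: "'n set" and g
    using that by (induction S rule: finite_induct) (simp_all add: add scale[of 0 0, simplified])
  have "f v = f (\<Sum>i\<in>UNIV. v$i *s axis i 1)"
    by (simp add: basis_expansion)
  also have "\<dots> = pairQ v (\<chi> i. f (axis i 1))"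
    by (simp add: f_sum scale pairQ_def)
  finally show ?thesis ..
qed

subsection \<open>Faces, normal cones and directions\<close>

lemma normal_coneQ_pairQ_eq:
  assumes "y \<in> normal_coneQ F P" "x \<in> F" "x' \<in> F"
  shows "pairQ x y = pairQ x' y"
  using assms unfolding normal_coneQ_def faceQ_def by (auto intro: antisym)

lemma spanQ_eq_span: "spanQ S = vec.span S"
  unfolding spanQ_def vec.span_explicit by auto

lemma dir_spanQ_eq_span: "dir_spanQ F = vec.span {x - y |x y. x \<in> F \<and> y \<in> F}"
  by (simp only: dir_spanQ_def spanQ_eq_span)

lemma subspace_dir_spanQ: "vec.subspace (dir_spanQ F)"
  unfolding dir_spanQ_eq_span by (rule vec.subspace_span)

lemma diff_in_dir_spanQ: "x \<in> F \<Longrightarrow> x' \<in> F \<Longrightarrow> x - x' \<in> dir_spanQ F"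
  unfolding dir_spanQ_eq_span by (rule vec.span_base) blast

lemma pairQ_dir_spanQ_eq_0:
  assumes const: "\<And>x x'. x \<in> F \<Longrightarrow> x' \<in> F \<Longrightarrow> pairQ x y = pairQ x' y"
    and a: "a \<in> dir_spanQ F"
  shows "pairQ a y = 0"
proof -
  have "vec.span {x - x' |x x'. x \<in> F \<and> x' \<in> F} \<subseteq> {a. pairQ a y = 0}"
  proof (rule vec.span_minimal)
    show "{x - x' |x x'. x \<in> F \<and> x' \<in> F} \<subseteq> {a. pairQ a y = 0}"
    proof clarify
      fix x x' assume "x \<in> F" "x' \<in> F"
      then have "pairQ x y = pairQ x' y"
        by (rule const)
      then show "pairQ (x - x') y = 0"
        by (simp add: pairQ_diff_left)
    qed
    show "vec.subspace {a. pairQ a y = 0}"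
      unfolding vec.subspace_def by (simp add: pairQ_add_left pairQ_scale_left)
  qed
  with a show ?thesis
    unfolding dir_spanQ_eq_span by blast
qed

lemma dir_spanQ_subset_span_translate:
  assumes "x0 \<in> F"
  shows "dir_spanQ F \<subseteq> vec.span ((\<lambda>x. x - x0) ` F)"
  unfolding dir_spanQ_eq_span
proof (rule vec.span_minimal[OF _ vec.subspace_span], safe)
  fix x y assume "x \<in> F" "y \<in> F"
  then have "x - x0 \<in> vec.span ((\<lambda>x. x - x0) ` F)" "y - x0 \<in> vec.span ((\<lambda>x. x - x0) ` F)"
    by (auto intro: vec.span_base)
  from vec.span_diff[OF this] show "x - y \<in> vec.span ((\<lambda>x. x - x0) ` F)"
    by simp
qed

lemma aff_hullQ_translate_sum:
  assumes "finite T" "T \<subseteq> F" "x0 \<in> F"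
  shows "x0 + (\<Sum>x\<in>T. c x *s (x - x0)) \<in> aff_hullQ F"
proof -
  define T1 where "T1 = T - {x0}"
  define d where "d x = (if x = x0 then 1 - sum c T1 else c x)" for x
  have T1: "finite T1" "x0 \<notin> T1" "insert x0 T1 \<subseteq> F"
    using assms by (auto simp: T1_def)
  have sum_d: "sum d (insert x0 T1) = 1"
    using T1 by (simp add: d_def) (intro sum.cong, auto)
  have "(\<Sum>v\<in>T1. d v *s v) = (\<Sum>v\<in>T1. c v *s v)"
    using T1 by (intro sum.cong) (auto simp: d_def)
  then have "(\<Sum>v\<in>insert x0 T1. d v *s v) = (1 - sum c T1) *s x0 + (\<Sum>v\<in>T1. c v *s v)"
    using T1 by (simp add: d_def)
  also have "\<dots> = x0 + (\<Sum>x\<in>T1. c x *s (x - x0))"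
    by (simp add: vec_eq_iff algebra_simps sum_subtractf sum_distrib_right sum_distrib_left)
  also have "\<dots> = x0 + (\<Sum>x\<in>T. c x *s (x - x0))"
    unfolding T1_def using assms(1)
    by (intro arg_cong[where f = "(+) x0"] sum.mono_neutral_left) auto
  finally show ?thesis
    unfolding aff_hullQ_def using T1 sum_d
    by (intro CollectI exI[of _ "insert x0 T1"] exI[of _ d]) simp
qed

lemma aff_hullQ_add_dir_spanQ:
  assumes "x0 \<in> F" "a \<in> dir_spanQ F"
  shows "x0 + a \<in> aff_hullQ F"
proof -
  from assms dir_spanQ_subset_span_translate have "a \<in> vec.span ((\<lambda>x. x - x0) ` F)"
    by blast
  then obtain T r where T: "finite T" "T \<subseteq> (\<lambda>x. x - x0) ` F" "a = (\<Sum>u\<in>T. r u *s u)"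
    unfolding vec.span_explicit by blast
  then obtain T' where T': "T' \<subseteq> F" "T = (\<lambda>x. x - x0) ` T'"
    by (auto simp: subset_image_iff)
  have inj: "inj_on (\<lambda>x. x - x0) T'"
    by (auto simp: inj_on_def)
  then have "finite T'"
    using T(1) T'(2) finite_imageD by blast
  moreover have "a = (\<Sum>x\<in>T'. r (x - x0) *s (x - x0))"
    by (simp only: T(3) T'(2) sum.reindex[OF inj] o_def)
  ultimately show ?thesis
    using aff_hullQ_translate_sum[OF _ T'(1) assms(1)] by simp
qed

lemma rel_interiorQ_step_in_dir_spanQ:
  assumes x0: "x0 \<in> rel_interiorQ F" and a: "a \<in> dir_spanQ F"
  shows "\<exists>s>0. x0 + s *s a \<in> F"
proof -
  from x0 obtain e where x0F: "x0 \<in> F" and "e > 0"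
    and e: "\<And>z. z \<in> aff_hullQ F \<Longrightarrow> (\<forall>i. \<bar>z$i - x0$i\<bar> < e) \<Longrightarrow> z \<in> F"
    unfolding rel_interiorQ_def by blast
  define S where "S = (\<Sum>i\<in>UNIV. \<bar>a$i\<bar>)"
  define s where "s = e / (1 + S)"
  have "S \<ge> 0"
    by (simp add: S_def sum_nonneg)
  with \<open>e > 0\<close> have "s > 0"
    by (simp add: s_def)
  have "x0 + s *s a \<in> aff_hullQ F"
    using aff_hullQ_add_dir_spanQ[OF x0F] vec.subspace_scale[OF subspace_dir_spanQ a] by blast
  moreover have "\<bar>(x0 + s *s a)$i - x0$i\<bar> < e" for i
  proof -
    have "\<bar>a$i\<bar> \<le> S"
      unfolding S_def by (rule member_le_sum) auto
    then have "s * \<bar>a$i\<bar> < s * (1 + S)"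
      using \<open>s > 0\<close> by simp
    then show ?thesis
      using \<open>s > 0\<close> \<open>S \<ge> 0\<close> \<open>e > 0\<close> by (simp add: abs_mult s_def)
  qed
  ultimately show ?thesis
    using e \<open>s > 0\<close> by blast
qed

lemma polyhedronQ_convex:
  assumes "polyhedronQ P" "p \<in> P" "x \<in> P" "0 \<le> l" "l \<le> 1"
  shows "(1 - l) *s p + l *s x \<in> P"
proof -
  obtain H where H: "P = {x. \<forall>(a, b)\<in>H. pairQ a x \<ge> b}"
    using assms(1) unfolding polyhedronQ_def by blast
  have "b \<le> pairQ a ((1 - l) *s p + l *s x)" if "(a, b) \<in> H" for a b
  proof -
    have "(1 - l) * b + l * b \<le> (1 - l) * pairQ a p + l * pairQ a x"
      using assms that H by (intro add_mono mult_left_mono) auto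
    moreover have "pairQ a ((1 - l) *s p + l *s x) = (1 - l) * pairQ a p + l * pairQ a x"
      by (simp only: pairQ_add_right pairQ_scale_right)
    ultimately show ?thesis
      by (simp add: algebra_simps)
  qed
  then show ?thesis
    using H by auto
qed

text \<open>Moving from \<open>x0\<close> backwards along \<open>a\<close> stays in \<open>F\<close>; a convex combination of that point
  with \<open>x\<close> cancels the \<open>a\<close>-component.\<close>

lemma rel_interiorQ_step_towards:
  assumes P: "polyhedronQ P" and FP: "F \<subseteq> P" and x0: "x0 \<in> rel_interiorQ F"
    and x: "x \<in> P" and a: "a \<in> dir_spanQ F"
  shows "\<exists>l>0. x0 + l *s (x - x0 - a) \<in> P"
proof -
  obtain s where "s > 0" and s: "x0 + s *s (- a) \<in> F"
    using rel_interiorQ_step_in_dir_spanQ[OF x0 vec.subspace_neg[OF subspace_dir_spanQ a]]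
    by blast
  define l where "l = s / (1 + s)"
  have l: "0 < l" "l \<le> 1" "(1 - l) * s = l"
    using \<open>s > 0\<close> by (auto simp: l_def field_simps)
  have mem: "(1 - l) *s (x0 + s *s (- a)) + l *s x \<in> P"
    using s FP l by (intro polyhedronQ_convex[OF P _ x]) auto
  have "((1 - l) * s) *s a = l *s a"
    using l(3) by simp
  then have eq: "(1 - l) *s (x0 + s *s (- a)) + l *s x = x0 + l *s (x - x0 - a)"
    by (simp add: vec_eq_iff algebra_simps)
  show ?thesis
    using l(1) mem[unfolded eq] by blast
qed

subsection \<open>The restriction map\<close>

lemma transpose_normal_coneQ:
  assumes "F \<subseteq> P" "y \<in> normal_coneQ F P"
  shows "transpose B *v y \<in> normal_coneQ {m. B *v m \<in> F} {m. B *v m \<in> P}"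
  using assms unfolding normal_coneQ_def faceQ_def by (auto simp: pairQ_transpose_right)

lemma inj_on_transpose_normal_coneQ:
  assumes dec: "\<And>v. \<exists>a\<in>dir_spanQ F. \<exists>m. v = a + B *v m"
  shows "inj_on (\<lambda>y. transpose B *v y) (normal_coneQ F P)"
proof (rule inj_onI)
  fix y1 y2
  assume y: "y1 \<in> normal_coneQ F P" "y2 \<in> normal_coneQ F P"
    and eq: "transpose B *v y1 = transpose B *v y2"
  obtain a m where a: "a \<in> dir_spanQ F" and am: "y1 - y2 = a + B *v m"
    using dec by blast
  have "transpose B *v (y1 - y2) = 0"
    using eq by (simp add: matrix_vector_mult_diff_distrib)
  then have "pairQ (B *v m) (y1 - y2) = 0"
    by (simp flip: pairQ_transpose_right)
  then have "pairQ (y1 - y2) (y1 - y2) = pairQ a (y1 - y2)"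
    using pairQ_add_left[of a "B *v m" "y1 - y2"] am by simp
  also have "\<dots> = 0"
  proof (rule pairQ_dir_spanQ_eq_0[OF _ a])
    fix x x' assume "x \<in> F" "x' \<in> F"
    with y have "pairQ x y1 = pairQ x' y1" "pairQ x y2 = pairQ x' y2"
      by (blast intro: normal_coneQ_pairQ_eq)+
    then show "pairQ x (y1 - y2) = pairQ x' (y1 - y2)"
      by (simp add: pairQ_diff_right)
  qed
  finally show "y1 = y2"
    using pairQ_self_eq_0 by fastforce
qed

lemma normal_coneQ_preimage_vanishes:
  assumes x0: "B *v m0 \<in> rel_interiorQ F"
    and z: "z \<in> normal_coneQ {m. B *v m \<in> F} P'"
    and w: "B *v w \<in> dir_spanQ F"
  shows "pairQ w z = 0"
proof -
  obtain s where "s > 0" and s: "B *v m0 + s *s (B *v w) \<in> F"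
    using rel_interiorQ_step_in_dir_spanQ[OF x0 w] by blast
  have "B *v (m0 + s *s w) = B *v m0 + s *s (B *v w)"
    by (simp add: matrix_vector_right_distrib vector_scalar_commute)
  with s x0 have "m0 + s *s w \<in> {m. B *v m \<in> F}" "m0 \<in> {m. B *v m \<in> F}"
    by (auto simp: rel_interiorQ_def)
  then have "pairQ (m0 + s *s w) z = pairQ m0 z"
    using normal_coneQ_pairQ_eq[OF z] by blast
  with \<open>s > 0\<close> show ?thesis
    by (simp add: pairQ_add_left pairQ_scale_left)
qed

text \<open>\<open>y\<close> is the functional \<open>a + B m \<mapsto> \<langle>m, z\<rangle>\<close>, well defined because \<open>z\<close> vanishes on
  \<open>B\<^sup>-\<^sup>1 L\<close>.\<close>

lemma exists_annihilator_with_transpose: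
  fixes B :: "rat ^ 'm ^ 'n"
  assumes L: "vec.subspace L"
    and dec: "\<And>v. \<exists>a\<in>L. \<exists>m. v = a + B *v m"
    and z: "\<And>w. B *v w \<in> L \<Longrightarrow> pairQ w z = 0"
  obtains y where "\<And>a. a \<in> L \<Longrightarrow> pairQ a y = 0" "transpose B *v y = z"
proof -
  have well_defined: "pairQ m z = pairQ m' z"
    if "a \<in> L" "a' \<in> L" "a + B *v m = a' + B *v m'" for a a' m m'
  proof -
    have "B *v (m - m') = a' - a"
      using that(3) by (simp add: algebra_simps)
    then have "pairQ (m - m') z = 0"
      using z vec.subspace_diff[OF L that(2,1)] by simp
    then show ?thesis
      by (simp add: pairQ_diff_left)
  qed
  define f where "f v = pairQ (SOME m. \<exists>a\<in>L. v = a + B *v m) z" for v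
  have f: "f (a + B *v m) = pairQ m z" if "a \<in> L" for a m
  proof -
    have "\<exists>m'. \<exists>a'\<in>L. a + B *v m = a' + B *v m'"
      using that by blast
    from someI_ex[OF this] obtain a' where "a' \<in> L"
      and "a + B *v m = a' + B *v (SOME m'. \<exists>a'\<in>L. a + B *v m = a' + B *v m')"
      by blast
    from well_defined[OF that this] show ?thesis
      by (simp add: f_def)
  qed
  have f_add: "f (u + v) = f u + f v" for u v
  proof -
    obtain a1 m1 a2 m2 where a: "a1 \<in> L" "a2 \<in> L"
      and u: "u = a1 + B *v m1" and v: "v = a2 + B *v m2"
      using dec by meson
    have uv: "u + v = (a1 + a2) + B *v (m1 + m2)"
      using u v by (simp add: algebra_simps)
    have "f (u + v) = pairQ (m1 + m2) z"
      unfolding uv by (rule f) (rule vec.subspace_add[OF L a])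
    then show ?thesis
      using f[OF a(1), of m1] f[OF a(2), of m2] u v by (simp add: pairQ_add_left)
  qed
  have f_scale: "f (c *s v) = c * f v" for c v
  proof -
    obtain a m where a: "a \<in> L" and v: "v = a + B *v m"
      using dec by blast
    have cv: "c *s v = c *s a + B *v (c *s m)"
      using v by (simp add: vector_scalar_commute vec.scale_right_distrib)
    have "f (c *s v) = pairQ (c *s m) z"
      unfolding cv by (rule f[OF vec.subspace_scale[OF L a]])
    then show ?thesis
      using f[OF a, of m] v by (simp add: pairQ_scale_left)
  qed
  define y where "y = (\<chi> i. f (axis i 1))"
  have fy: "pairQ v y = f v" for v
    unfolding y_def by (rule pairQ_representation[OF f_add f_scale])
  show ?thesis
  proof
    show "pairQ a y = 0" if "a \<in> L" for a
      using f[OF that, of 0] by (simp add: fy)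
    show "transpose B *v y = z"
      using f[OF vec.subspace_0[OF L]] by (intro pairQ_eqI) (simp add: pairQ_transpose_right fy)
  qed
qed

lemma annihilator_in_normal_coneQ:
  assumes P: "polyhedronQ P" and FP: "F \<subseteq> P" and x0: "B *v m0 \<in> rel_interiorQ F"
    and dec: "\<And>v. \<exists>a\<in>dir_spanQ F. \<exists>m. v = a + B *v m"
    and z: "z \<in> normal_coneQ {m. B *v m \<in> F} {m. B *v m \<in> P}"
    and y: "\<And>a. a \<in> dir_spanQ F \<Longrightarrow> pairQ a y = 0" "transpose B *v y = z"
  shows "y \<in> normal_coneQ F P"
proof -
  have x0F: "B *v m0 \<in> F"
    using x0 by (simp add: rel_interiorQ_def)
  have "pairQ x' y \<le> pairQ x y" if x': "x' \<in> F" and x: "x \<in> P" for x' x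
  proof -
    obtain a m where a: "a \<in> dir_spanQ F" and am: "x - B *v m0 = a + B *v m"
      using dec by blast
    obtain l where "l > 0" and "B *v m0 + l *s (B *v m) \<in> P"
      using rel_interiorQ_step_towards[OF P FP x0 x a] am by (auto simp: algebra_simps)
    then have "m0 + l *s m \<in> {m. B *v m \<in> P}"
      by (simp add: matrix_vector_right_distrib vector_scalar_commute)
    with z x0F have "pairQ m0 z \<le> pairQ (m0 + l *s m) z"
      by (auto simp: normal_coneQ_def faceQ_def)
    with \<open>l > 0\<close> have "pairQ m z \<ge> 0"
      by (simp add: pairQ_add_left pairQ_scale_left zero_le_mult_iff)
    moreover have "pairQ x y - pairQ x' y = pairQ m z"
    proof -
      have "pairQ x y - pairQ x' y = pairQ (x - B *v m0) y - pairQ (x' - B *v m0) y"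
        by (simp add: pairQ_diff_left)
      also have "\<dots> = pairQ m z"
        using y a diff_in_dir_spanQ[OF x' x0F]
        by (simp add: am pairQ_add_left flip: pairQ_transpose_right)
      finally show ?thesis .
    qed
    ultimately show ?thesis
      by simp
  qed
  then show ?thesis
    using FP unfolding normal_coneQ_def faceQ_def by blast
qed

theorem bij_betw_transpose_normal_coneQ:
  fixes B :: "rat ^ 'm ^ 'n"
  assumes P: "polyhedronQ P" and FP: "F \<subseteq> P" and x0: "B *v m0 \<in> rel_interiorQ F"
    and dec: "\<And>v. \<exists>a\<in>dir_spanQ F. \<exists>m. v = a + B *v m"
  shows "bij_betw (\<lambda>y. transpose B *v y)
           (normal_coneQ F P) (normal_coneQ {m. B *v m \<in> F} {m. B *v m \<in> P})"
proof (rule bij_betw_imageI)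
  show "inj_on (\<lambda>y. transpose B *v y) (normal_coneQ F P)"
    using dec by (rule inj_on_transpose_normal_coneQ)
  show "(\<lambda>y. transpose B *v y) ` normal_coneQ F P
      = normal_coneQ {m. B *v m \<in> F} {m. B *v m \<in> P}"
  proof (intro equalityI subsetI)
    fix z assume z: "z \<in> normal_coneQ {m. B *v m \<in> F} {m. B *v m \<in> P}"
    obtain y where "\<And>a. a \<in> dir_spanQ F \<Longrightarrow> pairQ a y = 0" "transpose B *v y = z"
      using exists_annihilator_with_transpose[OF subspace_dir_spanQ dec]
        normal_coneQ_preimage_vanishes[OF x0 z] by blast
    with annihilator_in_normal_coneQ[OF P FP x0 dec z]
    show "z \<in> (\<lambda>y. transpose B *v y) ` normal_coneQ F P"
      by blast
  qed (use FP transpose_normal_coneQ in blast)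
qed

theorem mainTheorem5:
  fixes A :: "int ^ 'm ^ 'n" \<comment> \<open>i : M = Z^m \<rightarrow> \<Lambda> = Z^n\<close>
    and D :: "int ^ 'n ^ 'k" \<comment> \<open>d : \<Lambda> \<rightarrow> B = Z^k\<close>
    and P F :: "(rat ^ 'n) set"
  assumes inj_i: "inj (\<lambda>x. A *v x)"
    and surj_d: "surj (\<lambda>x. D *v x)"
    and exact: "\<forall>x. D *v x = 0 \<longleftrightarrow> x \<in> range (\<lambda>z. A *v z)"
    and poly: "polyhedronQ P"
    and face: "is_faceQ F P"
    and stable: "M_stable A F"
  shows "bij_betw (\<lambda>y. transpose (ratmat A) *v y)
           (normal_coneQ F P)
           (normal_coneQ {m. ratmat A *v m \<in> F} {m. ratmat A *v m \<in> P})"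
proof -
  obtain m0 where "ratmat A *v m0 \<in> rel_interiorQ F"
    and "\<And>v. \<exists>a\<in>dir_spanQ F. \<exists>m. v = a + ratmat A *v m"
    using stable unfolding M_stable_def by blast
  moreover have "F \<subseteq> P"
    using face by (auto simp: is_faceQ_def faceQ_def)
  ultimately show ?thesis
    using bij_betw_transpose_normal_coneQ[OF poly] by blast
qed

end
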